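(* Let $\mathbb{R}^p=E^q\oplus E^{p-q}$ be a decomposition with $\dim E^q=q\ge1$ such that the image of $E^q$ in the torus $\mathbb{R}^p/\mathbb{Z}^p$ is dense, and fix a scalar product on $E^q$. Let $A\in\mathrm{GL}_p(\mathbb{Z})$ preserve $E^q$ and $E^{p-q}$ and assume that $A|_{E^q}$ is a similarity for the given scalar product. Then $A$ is semi-simple (diagonalizable over $\mathbb{C}$). In particular, every element of a subgroup $U\subset\mathrm{GL}_p(\mathbb{Z})$ all of whose elements have these properties is semi-simple. *)

theory Defs
  imports "HOL-Analysis.Analysis"
begin

definition integer_matrix :: "real^'n^'n \<Rightarrow> bool" where
  "integer_matrix A \<longleftrightarrow> (\<forall>i j. A $ i $ j \<in> \<int>)"

definition in_GL_Z :: "real^'n^'n \<Rightarrow> bool" where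
  "in_GL_Z A \<longleftrightarrow> integer_matrix A \<and>
     (\<exists>B. integer_matrix B \<and> A ** B = mat 1 \<and> B ** A = mat 1)"

definition integer_vector :: "real^'n \<Rightarrow> bool" where
  "integer_vector z \<longleftrightarrow> (\<forall>i. z $ i \<in> \<int>)"

text \<open>The image of E in the torus R^p/Z^p is dense iff E + Z^p is dense in R^p.\<close>
definition dense_in_torus :: "(real^'n) set \<Rightarrow> bool" where
  "dense_in_torus E \<longleftrightarrow> closure {x + z | x z. x \<in> E \<and> integer_vector z} = UNIV"

definition scalar_product_on :: "(real^'n) set \<Rightarrow> (real^'n \<Rightarrow> real^'n \<Rightarrow> real) \<Rightarrow> bool" where
  "scalar_product_on E B \<longleftrightarrow>
     (\<forall>x\<in>E. \<forall>y\<in>E. B x y = B y x) \<and>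
     (\<forall>x\<in>E. \<forall>y\<in>E. \<forall>z\<in>E. \<forall>a b. B (a *\<^sub>R x + b *\<^sub>R y) z = a * B x z + b * B y z) \<and>
     (\<forall>x\<in>E. x \<noteq> 0 \<longrightarrow> B x x > 0)"

definition similarity_on :: "(real^'n) set \<Rightarrow> (real^'n \<Rightarrow> real^'n \<Rightarrow> real) \<Rightarrow> real^'n^'n \<Rightarrow> bool" where
  "similarity_on E B A \<longleftrightarrow>
     (\<exists>c>0. \<forall>x\<in>E. \<forall>y\<in>E. B (A *v x) (A *v y) = c * B x y)"

definition diagonal_matrix :: "complex^'n^'n \<Rightarrow> bool" where
  "diagonal_matrix D \<longleftrightarrow> (\<forall>i j. i \<noteq> j \<longrightarrow> D $ i $ j = 0)"

definition complexify :: "real^'n^'n \<Rightarrow> complex^'n^'n" where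
  "complexify A = (\<chi> i j. complex_of_real (A $ i $ j))"

definition semisimple :: "real^'n^'n \<Rightarrow> bool" where
  "semisimple A \<longleftrightarrow>
     (\<exists>P D :: complex^'n^'n. invertible P \<and> diagonal_matrix D \<and> complexify A ** P = P ** D)"

end

theory Submission
  imports Defs
    "Jordan_Normal_Form.Jordan_Normal_Form_Existence"
    "Jordan_Normal_Form.Jordan_Normal_Form_Uniqueness"
    "HOL-Computational_Algebra.Field_as_Ring"
begin

text \<open>
  Since \<open>A\<close> scales \<open>B\<close> by a constant \<open>c\<close>, its \<open>B\<close>-adjoint on \<open>E\<close> is \<open>c A\<^sup>-\<^sup>1\<close>, which
  commutes with \<open>A\<close>: the restriction of \<open>A\<close> to \<open>E\<close> is normal. Hence for every polynomial \<open>p\<close>,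
  if \<open>p(A)\<close> is nilpotent on \<open>E\<close> then \<open>p(A)\<close> vanishes on \<open>E\<close>. Take for \<open>p\<close> the squarefree part
  of the characteristic polynomial, computed over \<open>\<rat>\<close>; triangularization shows that \<open>p(A)\<close>
  is nilpotent. So the rational matrix \<open>p(A)\<close> vanishes on \<open>E\<close>, and its rows are rational vectors
  orthogonal to \<open>E\<close>. A nonzero such row, scaled to an integer vector \<open>z\<close>, would confine \<open>E + \<int>\<^sup>p\<close>
  to the closed set \<open>{v. z \<bullet> v \<in> \<int>}\<close>, contradicting density. Thus \<open>p(A) = 0\<close> with \<open>p\<close>
  squarefree, which forces every Jordan block of \<open>A\<close> to have size one.
\<close>

no_notation Matrix.vec_index (infixl "$" 100)
hide_const (open) Matrix.mat VectorSpace.subspace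

lemmas vec_cart_eq_iff = Finite_Cartesian_Product.vec_eq_iff

definition enum_index :: "nat \<Rightarrow> 'n::finite" where
  "enum_index = (SOME h. bij_betw h {0..<CARD('n)} (UNIV::'n set))"

lemma bij_betw_enum_index: "bij_betw (enum_index :: nat \<Rightarrow> 'n::finite) {0..<CARD('n)} UNIV"
proof -
  have "\<exists>h. bij_betw h {0..<CARD('n)} (UNIV::'n set)"
    using ex_bij_betw_nat_finite[of "UNIV::'n set"] by auto
  then show ?thesis unfolding enum_index_def by (rule someI_ex)
qed

definition index_pos :: "'n::finite \<Rightarrow> nat" where
  "index_pos = inv_into {0..<CARD('n)} enum_index"

lemma index_pos_enum_index [simp]: "i < CARD('n::finite) \<Longrightarrow> index_pos (enum_index i :: 'n) = i"
  unfolding index_pos_def using bij_betw_enum_index[where 'n='n] by (simp add: bij_betw_def)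

lemma enum_index_index_pos [simp]: "enum_index (index_pos (a::'n::finite)) = a"
  unfolding index_pos_def using bij_betw_enum_index[where 'n='n]
  by (simp add: bij_betw_def f_inv_into_f)

lemma index_pos_less [simp]: "index_pos (a::'n::finite) < CARD('n)"
  unfolding index_pos_def using bij_betw_enum_index[where 'n='n]
  by (metis atLeastLessThan_iff bij_betw_def inv_into_into UNIV_I)

lemma index_pos_inject: "index_pos (a::'n::finite) = index_pos b \<longleftrightarrow> a = b"
  by (metis enum_index_index_pos)

lemma enum_index_inject:
  "i < CARD('n::finite) \<Longrightarrow> j < CARD('n) \<Longrightarrow> (enum_index i :: 'n) = enum_index j \<longleftrightarrow> i = j"
  by (metis index_pos_enum_index)

lemma sum_enum_index: "(\<Sum>k\<in>{0..<CARD('n::finite)}. g (enum_index k :: 'n)) = (\<Sum>a\<in>UNIV. g a)"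
  using sum.reindex_bij_betw[OF bij_betw_enum_index[where 'n='n], of g] .

definition to_mat :: "'a^'n^'n \<Rightarrow> 'a mat" where
  "to_mat M = Matrix.mat CARD('n::finite) CARD('n) (\<lambda>(i,j). M $ enum_index i $ enum_index j)"

definition from_mat :: "'a mat \<Rightarrow> 'a^'n^'n" where
  "from_mat M = (\<chi> a b. M $$ (index_pos a, index_pos b))"

definition to_vec :: "'a^'n \<Rightarrow> 'a Matrix.vec" where
  "to_vec v = Matrix.vec CARD('n::finite) (\<lambda>i. v $ enum_index i)"

definition from_vec :: "'a Matrix.vec \<Rightarrow> 'a^'n" where
  "from_vec v = (\<chi> a. Matrix.vec_index v (index_pos a))"

lemma to_mat_carrier [simp]: "to_mat (M::'a^'n::finite^'n) \<in> carrier_mat CARD('n) CARD('n)"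
  unfolding to_mat_def by simp

lemma to_mat_dim [simp]:
  "dim_row (to_mat (M::'a^'n::finite^'n)) = CARD('n)" "dim_col (to_mat M) = CARD('n)"
  unfolding to_mat_def by simp_all

lemma to_mat_index [simp]:
  "i < CARD('n::finite) \<Longrightarrow> j < CARD('n) \<Longrightarrow>
    to_mat (M::'a^'n^'n) $$ (i,j) = M $ enum_index i $ enum_index j"
  unfolding to_mat_def by simp

lemma to_vec_carrier [simp]: "to_vec (v::'a^'n::finite) \<in> carrier_vec CARD('n)"
  unfolding to_vec_def by simp

lemma to_vec_dim [simp]: "dim_vec (to_vec (v::'a^'n::finite)) = CARD('n)"
  unfolding to_vec_def by simp

lemma to_vec_index [simp]:
  "i < CARD('n::finite) \<Longrightarrow> Matrix.vec_index (to_vec (v::'a^'n)) i = v $ enum_index i"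
  unfolding to_vec_def by simp

lemma from_mat_to_mat [simp]: "from_mat (to_mat (M::'a^'n::finite^'n)) = M"
  unfolding from_mat_def by (simp add: vec_cart_eq_iff)

lemma to_mat_from_mat:
  "M \<in> carrier_mat CARD('n::finite) CARD('n) \<Longrightarrow> to_mat (from_mat M :: 'a^'n^'n) = M"
  unfolding from_mat_def by (intro eq_matI) auto

lemma to_vec_from_vec: "v \<in> carrier_vec CARD('n::finite) \<Longrightarrow> to_vec (from_vec v :: 'a^'n) = v"
  unfolding from_vec_def by (intro eq_vecI) auto

lemma to_mat_mult: "to_mat ((M::'a::semiring_1^'n::finite^'n) ** N) = to_mat M * to_mat N"
proof (intro eq_matI)
  fix i j assume "i < dim_row (to_mat M * to_mat N)" "j < dim_col (to_mat M * to_mat N)"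
  then have i: "i < CARD('n)" and j: "j < CARD('n)" by auto
  have "(to_mat M * to_mat N) $$ (i,j) =
      (\<Sum>k\<in>{0..<CARD('n)}. M $ enum_index i $ enum_index k * N $ enum_index k $ enum_index j)"
    using i j by (simp add: scalar_prod_def)
  also have "\<dots> = (\<Sum>k\<in>UNIV. M $ enum_index i $ k * N $ k $ enum_index j)"
    by (rule sum_enum_index)
  finally show "to_mat (M ** N) $$ (i,j) = (to_mat M * to_mat N) $$ (i,j)"
    using i j by (simp add: matrix_matrix_mult_def)
qed auto

lemma to_vec_mult: "to_vec ((M::'a::semiring_1^'n::finite^'n) *v v) = to_mat M *\<^sub>v to_vec v"
proof (intro eq_vecI)
  fix i assume "i < dim_vec (to_mat M *\<^sub>v to_vec v)"
  then have i: "i < CARD('n)" by auto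
  have "Matrix.vec_index (to_mat M *\<^sub>v to_vec v) i =
      (\<Sum>k\<in>{0..<CARD('n)}. M $ enum_index i $ enum_index k * v $ enum_index k)"
    using i by (simp add: scalar_prod_def)
  also have "\<dots> = (\<Sum>k\<in>UNIV. M $ enum_index i $ k * v $ k)"
    by (rule sum_enum_index)
  finally show "Matrix.vec_index (to_vec (M *v v)) i = Matrix.vec_index (to_mat M *\<^sub>v to_vec v) i"
    using i by (simp add: matrix_vector_mult_def)
qed auto

lemma from_mat_mult:
  "A \<in> carrier_mat CARD('n::finite) CARD('n) \<Longrightarrow> B \<in> carrier_mat CARD('n) CARD('n) \<Longrightarrow>
    (from_mat (A * B) :: 'a::semiring_1^'n^'n) = from_mat A ** from_mat B"
  by (metis from_mat_to_mat to_mat_from_mat to_mat_mult)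

lemma from_mat_one: "(from_mat (1\<^sub>m CARD('n::finite)) :: 'a::semiring_1^'n^'n) = mat 1"
proof -
  have "to_mat (mat 1 :: 'a^'n^'n) = 1\<^sub>m CARD('n)"
    by (intro eq_matI) (auto simp: Finite_Cartesian_Product.mat_def enum_index_inject)
  then show ?thesis by (metis from_mat_to_mat)
qed

lemma to_vec_eq_0_iff: "to_vec (v::'a::zero^'n::finite) = 0\<^sub>v CARD('n) \<longleftrightarrow> v = 0"
proof
  assume "to_vec v = 0\<^sub>v CARD('n)"
  then have "v $ enum_index i = 0" if "i < CARD('n)" for i
    using that by (metis index_zero_vec(1) to_vec_index)
  then show "v = 0" by (metis enum_index_index_pos index_pos_less vec_cart_eq_iff zero_index)
qed (intro eq_vecI, auto)

lemma jordan_nf_vec: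
  fixes M :: "complex^'n::finite^'n"
  obtains n_as and P :: "complex^'n^'n" where "jordan_nf (to_mat M) n_as"
    and "sum_list (map fst n_as) = CARD('n)"
    and "invertible P" and "M ** P = P ** from_mat (jordan_matrix n_as)"
proof -
  let ?n = "CARD('n)"
  obtain as where "char_poly (to_mat M) = (\<Prod>a\<leftarrow>as. [:- a, 1:])"
    using char_poly_factorized[OF to_mat_carrier] by blast
  from jordan_nf_exists[OF to_mat_carrier this] obtain n_as where jnf: "jordan_nf (to_mat M) n_as"
    by blast
  define J where "J = (jordan_matrix n_as :: complex mat)"
  from jnf obtain P Q where "similar_mat_wit (to_mat M) J P Q"
    unfolding jordan_nf_def similar_mat_def J_def by blast
  then have P: "P \<in> carrier_mat ?n ?n" and J: "J \<in> carrier_mat ?n ?n" and Q: "Q \<in> carrier_mat ?n ?n"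
    and PQ: "P * Q = 1\<^sub>m ?n" and QP: "Q * P = 1\<^sub>m ?n" and MPJQ: "to_mat M = P * J * Q"
    unfolding similar_mat_wit_def Let_def by auto
  have "M = from_mat (P * J) ** from_mat Q"
    by (metis from_mat_mult from_mat_to_mat MPJQ P J Q mult_carrier_mat)
  then have M: "M = from_mat P ** from_mat J ** from_mat Q"
    by (simp add: from_mat_mult[OF P J])
  have P'Q': "(from_mat P :: complex^'n^'n) ** from_mat Q = mat 1"
    by (metis from_mat_mult[OF P Q] PQ from_mat_one)
  have Q'P': "(from_mat Q :: complex^'n^'n) ** from_mat P = mat 1"
    by (metis from_mat_mult[OF Q P] QP from_mat_one)
  show thesis
  proof
    show "jordan_nf (to_mat M) n_as" by (rule jnf)
    show "sum_list (map fst n_as) = ?n" using J unfolding J_def by auto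
    show "invertible (from_mat P :: complex^'n^'n)" unfolding invertible_def using P'Q' Q'P' by blast
    show "M ** from_mat P = from_mat P ** from_mat (jordan_matrix n_as)"
      using Q'P' unfolding M J_def by (simp add: matrix_mul_assoc[symmetric])
  qed
qed

definition poly_mv :: "'a::comm_ring_1 poly \<Rightarrow> 'a^'n^'n \<Rightarrow> 'a^'n \<Rightarrow> 'a^'n" where
  "poly_mv p M v = fold_coeffs (\<lambda>a w. a *s v + M *v w) p 0"

lemma matrix_vector_mult_scalar: "(M::'a::comm_ring_1^'n^'m) *v (c *s v) = c *s (M *v v)"
  by (simp add: vec_cart_eq_iff matrix_vector_mult_def sum_distrib_left mult_ac)

lemma mat_mult_vector: "mat l *v (v::'a::comm_ring_1^'n::finite) = l *s v"
proof -
  have "(mat l *v v) $ i = (\<Sum>j\<in>UNIV. (if i = j then l else 0) * v $ j)" for i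
    by (simp add: matrix_vector_mult_def Finite_Cartesian_Product.mat_def)
  also have "\<dots> i = (\<Sum>j\<in>UNIV. if i = j then l * v $ j else 0)" for i
    by (rule sum.cong) auto
  finally show ?thesis by (simp add: vec_cart_eq_iff)
qed

lemma poly_mv_0 [simp]: "poly_mv 0 M v = 0"
  by (simp add: poly_mv_def)

lemma poly_mv_pCons [simp]: "poly_mv (pCons a p) M v = a *s v + M *v poly_mv p M v"
proof (cases "p = 0 \<and> a = 0")
  case True then show ?thesis by (simp add: poly_mv_def)
next
  case False
  then show ?thesis
    by (auto simp: poly_mv_def fold_coeffs_pCons_not_0_0_eq fold_coeffs_pCons_coeff_not_0_eq)
qed

lemma poly_mv_zero_vec [simp]: "poly_mv p M 0 = 0"
  by (induct p) auto

lemma poly_mv_add_vec: "poly_mv p M (u + v) = poly_mv p M u + poly_mv p M v"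
  by (induct p) (simp_all add: matrix_vector_right_distrib vector_add_ldistrib add_ac)

lemma poly_mv_scalar_vec: "poly_mv p M (c *s v) = c *s poly_mv p M v"
  by (induct p)
    (simp_all add: matrix_vector_mult_scalar vector_add_ldistrib vector_smult_assoc mult.commute)

lemma poly_mv_sum_vec: "poly_mv p M (sum f S) = (\<Sum>j\<in>S. poly_mv p M (f j))"
  by (induct S rule: infinite_finite_induct) (simp_all add: poly_mv_add_vec)

lemma poly_mv_add: "poly_mv (p + q) M v = poly_mv p M v + poly_mv q M v"
proof (induct p arbitrary: q)
  case 0 then show ?case by simp
next
  case (pCons a p)
  obtain b q' where q: "q = pCons b q'" by (cases q) auto
  have "poly_mv (p + q') M v = poly_mv p M v + poly_mv q' M v"
    using pCons(2)[of q'] by (simp add: add.commute)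
  then show ?case by (simp add: q matrix_vector_right_distrib vector_sadd_rdistrib add_ac)
qed

lemma poly_mv_smult: "poly_mv (Polynomial.smult c p) M v = c *s poly_mv p M v"
  by (induct p)
    (simp_all add: matrix_vector_mult_scalar vector_add_ldistrib vector_smult_assoc mult.commute)

lemma poly_mv_mult: "poly_mv (p * q) M v = poly_mv p M (poly_mv q M v)"
proof (induct p)
  case 0 then show ?case by simp
next
  case (pCons a p)
  have "pCons a p * q = Polynomial.smult a q + pCons 0 (p * q)" by (simp add: mult_pCons_left)
  then show ?case using pCons by (simp add: poly_mv_add poly_mv_smult)
qed

lemma poly_mv_linear: "poly_mv [:-t, 1:] M v = M *v v - t *s v"
  by (simp add: vector_smult_lneg)

lemma poly_mv_linear_mat: "poly_mv [:-t, 1:] M v = (M - mat t) *v v"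
  unfolding poly_mv_linear by (simp add: matrix_vector_mult_diff_rdistrib mat_mult_vector)

lemma poly_mv_commute_matrix:
  assumes "M ** K = K ** M"
  shows "poly_mv p M (K *v v) = K *v poly_mv p M v"
  by (induct p)
    (simp_all add: matrix_vector_right_distrib matrix_vector_mult_scalar matrix_vector_mul_assoc assms)

lemma poly_mv_commute:
  assumes "M ** K = K ** M"
  shows "poly_mv p M (poly_mv q K v) = poly_mv q K (poly_mv p M v)"
  by (induct q)
    (simp_all add: poly_mv_add_vec poly_mv_scalar_vec poly_mv_commute_matrix[OF assms])

lemma poly_mv_eigenvector:
  assumes "M *v w = t *s w"
  shows "poly_mv p M w = poly p t *s w"
  by (induct p)
    (simp_all add: matrix_vector_mult_scalar assms vector_sadd_rdistrib vector_smult_assoc mult.commute)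

lemma poly_mv_in_subspace:
  fixes E :: "(real^'n::finite) set"
  assumes "subspace E" and "\<And>x. x \<in> E \<Longrightarrow> M *v x \<in> E" and "v \<in> E"
  shows "poly_mv p M v \<in> E"
  by (induct p) (use assms in \<open>simp_all add: scalar_mult_eq_scaleR subspace_0 subspace_add subspace_scale\<close>)

lemma poly_mv_rational:
  fixes M :: "real^'n::finite^'n"
  assumes "\<And>i. coeff p i \<in> \<rat>" and "\<And>i j. M $ i $ j \<in> \<rat>" and "\<And>i. v $ i \<in> \<rat>"
  shows "poly_mv p M v $ i \<in> \<rat>"
  using assms(1)
proof (induct p arbitrary: i)
  case 0 then show ?case by simp
next
  case (pCons a p)
  have "a \<in> \<rat>" using pCons(3)[of 0] by simp
  moreover have "\<And>i. coeff p i \<in> \<rat>" using pCons(3)[of "Suc _"] by simp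
  ultimately show ?case using pCons(2) assms(2,3)
    by (auto simp: matrix_vector_mult_def intro!: Rats_add Rats_mult Rats_sum)
qed

section \<open>Normal operators on a subspace with a scalar product\<close>

locale scalar_product_subspace =
  fixes E :: "(real^'n::finite) set" and B :: "real^'n \<Rightarrow> real^'n \<Rightarrow> real"
  assumes subspace: "subspace E" and scalar_product: "scalar_product_on E B"
begin

lemma sym: "x \<in> E \<Longrightarrow> y \<in> E \<Longrightarrow> B x y = B y x"
  using scalar_product unfolding scalar_product_on_def by blast

lemma linear_left:
  "x \<in> E \<Longrightarrow> y \<in> E \<Longrightarrow> z \<in> E \<Longrightarrow> B (a *\<^sub>R x + b *\<^sub>R y) z = a * B x z + b * B y z"
  using scalar_product unfolding scalar_product_on_def by blast

lemma definite: "x \<in> E \<Longrightarrow> B x x = 0 \<Longrightarrow> x = 0"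
  using scalar_product unfolding scalar_product_on_def by fastforce

lemma add_left: "x \<in> E \<Longrightarrow> y \<in> E \<Longrightarrow> z \<in> E \<Longrightarrow> B (x + y) z = B x z + B y z"
  using linear_left[of x y z 1 1] by simp

lemma scale_left: "x \<in> E \<Longrightarrow> z \<in> E \<Longrightarrow> B (a *\<^sub>R x) z = a * B x z"
  using linear_left[of x x z a 0] by simp

lemma zero_left: "z \<in> E \<Longrightarrow> B 0 z = 0"
  using scale_left[of 0 z 0] subspace_0[OF subspace] by simp

lemma zero_right: "z \<in> E \<Longrightarrow> B z 0 = 0"
  using zero_left sym[of z 0] subspace_0[OF subspace] by simp

lemma add_right: "x \<in> E \<Longrightarrow> y \<in> E \<Longrightarrow> z \<in> E \<Longrightarrow> B z (x + y) = B z x + B z y"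
  using add_left sym subspace by (simp add: subspace_add)

lemma scale_right: "x \<in> E \<Longrightarrow> z \<in> E \<Longrightarrow> B z (a *\<^sub>R x) = a * B z x"
  using scale_left sym subspace by (simp add: subspace_scale)

end

locale normal_on_subspace = scalar_product_subspace E B
  for E :: "(real^'n::finite) set" and B +
  fixes A K :: "real^'n^'n"
  assumes A_closed: "\<And>x. x \<in> E \<Longrightarrow> A *v x \<in> E"
    and K_closed: "\<And>x. x \<in> E \<Longrightarrow> K *v x \<in> E"
    and adjoint: "\<And>x y. x \<in> E \<Longrightarrow> y \<in> E \<Longrightarrow> B (A *v x) y = B x (K *v y)"
    and commute: "A ** K = K ** A"
begin

lemma poly_mv_A_closed: "x \<in> E \<Longrightarrow> poly_mv p A x \<in> E"
  using poly_mv_in_subspace[OF subspace A_closed] .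

lemma poly_mv_K_closed: "x \<in> E \<Longrightarrow> poly_mv p K x \<in> E"
  using poly_mv_in_subspace[OF subspace K_closed] .

lemma adjoint_poly_mv:
  assumes x: "x \<in> E" and y: "y \<in> E"
  shows "B (poly_mv p A x) y = B x (poly_mv p K y)"
  using y
proof (induct p arbitrary: y)
  case 0 then show ?case using x by (simp add: zero_left zero_right)
next
  case (pCons a p)
  have w: "poly_mv p A x \<in> E" using poly_mv_A_closed[OF x] .
  have Ky: "K *v y \<in> E" using K_closed pCons(3) .
  have "B (poly_mv (pCons a p) A x) y = a * B x y + B (A *v poly_mv p A x) y"
    using x w A_closed pCons(3) subspace
    by (simp add: scalar_mult_eq_scaleR add_left scale_left subspace_scale)
  also have "B (A *v poly_mv p A x) y = B (poly_mv p A x) (K *v y)"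
    using adjoint w pCons(3) by blast
  also have "\<dots> = B x (poly_mv p K (K *v y))" using pCons(2)[OF Ky] .
  also have "poly_mv p K (K *v y) = K *v poly_mv p K y" by (rule poly_mv_commute_matrix) simp
  finally show ?case
    using x poly_mv_K_closed[OF pCons(3)] K_closed pCons(3) subspace
    by (simp add: scalar_mult_eq_scaleR add_right scale_right subspace_scale)
qed

text \<open>For normal \<open>N = p(A)\<close> with adjoint \<open>N\<^sup>* = p(K)\<close>: \<open>N y = 0\<close> gives \<open>|N\<^sup>* y|\<^sup>2 = B (N N\<^sup>* y) y = 0\<close>,
  and then \<open>|y|\<^sup>2 = B (N x) y = B x (N\<^sup>* y) = 0\<close> for \<open>y = N x\<close>.\<close>
lemma poly_mv_square_eq_0_imp_eq_0:
  assumes x: "x \<in> E" and NN: "poly_mv p A (poly_mv p A x) = 0"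
  shows "poly_mv p A x = 0"
proof -
  define y where "y = poly_mv p A x"
  have yE: "y \<in> E" unfolding y_def using poly_mv_A_closed[OF x] .
  have Ky: "poly_mv p K y \<in> E" using poly_mv_K_closed[OF yE] .
  have "B (poly_mv p K y) (poly_mv p K y) = B (poly_mv p A (poly_mv p K y)) y"
    using adjoint_poly_mv[OF Ky yE] ..
  also have "poly_mv p A (poly_mv p K y) = poly_mv p K (poly_mv p A y)"
    by (rule poly_mv_commute[OF commute])
  finally have "poly_mv p K y = 0" using NN yE Ky by (simp add: y_def zero_left definite)
  then have "B y y = 0" using adjoint_poly_mv[OF x yE, where p=p] x by (simp add: y_def[symmetric] zero_right)
  then show ?thesis using definite yE y_def by blast
qed

lemma poly_mv_nilpotent_imp_eq_0:
  assumes "x \<in> E" and "(poly_mv p A ^^ k) x = 0"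
  shows "poly_mv p A x = 0"
  using assms
proof (induct k arbitrary: x)
  case 0 then show ?case by simp
next
  case (Suc k)
  have "(poly_mv p A ^^ k) (poly_mv p A x) = 0"
    using Suc(3) by (simp add: funpow_Suc_right del: funpow.simps)
  then have "poly_mv p A (poly_mv p A x) = 0" using Suc(1) poly_mv_A_closed[OF Suc(2)] by simp
  then show ?case using poly_mv_square_eq_0_imp_eq_0[OF Suc(2)] by blast
qed

end

lemma similarity_normal_on_subspace:
  fixes A A' :: "real^'n::finite^'n"
  assumes sp: "scalar_product_subspace E B"
    and AA': "A ** A' = mat 1" and A'A: "A' ** A = mat 1"
    and AE: "(\<lambda>x. A *v x) ` E \<subseteq> E" and sim: "similarity_on E B A"
  obtains c where "normal_on_subspace E B A (c *\<^sub>R A')"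
proof -
  interpret scalar_product_subspace E B by (rule sp)
  have img: "(\<lambda>x. A *v x) ` E = E"
  proof (rule subspace_dim_equal[OF _ subspace AE])
    show "subspace ((\<lambda>x. A *v x) ` E)" using subspace by (intro linear_subspace_image) auto
    have "inj (\<lambda>x. A *v x)"
      by (rule injI) (metis matrix_vector_mul_assoc A'A matrix_vector_mul_lid)
    then show "dim E \<le> dim ((\<lambda>x. A *v x) ` E)"
      by (simp add: dim_image_eq inj_on_subset)
  qed
  have A'E: "A' *v x \<in> E" if "x \<in> E" for x
  proof -
    from that img obtain y where "y \<in> E" "x = A *v y" by blast
    then show ?thesis by (simp add: matrix_vector_mul_assoc A'A)
  qed
  from sim obtain c
    where scale: "\<And>x y. x \<in> E \<Longrightarrow> y \<in> E \<Longrightarrow> B (A *v x) (A *v y) = c * B x y"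
    unfolding similarity_on_def by blast
  have cA'v: "(c *\<^sub>R A') *v y = c *\<^sub>R (A' *v y)" for y
    by (simp add: scaleR_matrix_vector_assoc)
  show thesis
  proof (rule that, unfold_locales)
    show "A *v x \<in> E" if "x \<in> E" for x using AE that by blast
    show "(c *\<^sub>R A') *v x \<in> E" if "x \<in> E" for x
      using A'E that subspace by (simp add: cA'v subspace_scale)
    show "B (A *v x) y = B x ((c *\<^sub>R A') *v y)" if x: "x \<in> E" and y: "y \<in> E" for x y
    proof -
      have "B (A *v x) y = B (A *v x) (A *v (A' *v y))"
        by (simp add: matrix_vector_mul_assoc AA')
      also have "\<dots> = c * B x (A' *v y)" using scale x A'E[OF y] by blast
      finally show ?thesis using scale_right[OF A'E[OF y] x] by (simp add: cA'v)
    qed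
    show "A ** (c *\<^sub>R A') = (c *\<^sub>R A') ** A"
      by (simp add: matrix_scalar_ac scalar_matrix_assoc[symmetric] AA' A'A)
  qed
qed

section \<open>Rational vectors orthogonal to a subspace that is dense in the torus\<close>

lemma rational_vector_common_denominator:
  fixes w :: "real^'n::finite"
  assumes "\<And>i. w $ i \<in> \<rat>"
  obtains d :: int where "d > 0" and "\<And>i. of_int d * w $ i \<in> \<int>"
proof -
  have "\<exists>b::int. b > 0 \<and> of_int b * w $ i \<in> \<int>" for i
    using assms[of i] by (cases rule: Rats_cases') (auto intro!: exI)
  then obtain b :: "'n \<Rightarrow> int" where b: "\<And>i. b i > 0" "\<And>i. of_int (b i) * w $ i \<in> \<int>"
    by metis
  define d where "d = (\<Prod>i\<in>UNIV. b i)"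
  have "of_int d * w $ i \<in> \<int>" for i
  proof -
    have "d = b i * (\<Prod>k\<in>UNIV - {i}. b k)" unfolding d_def by (simp add: prod.remove)
    then have "of_int d * w $ i = of_int (\<Prod>k\<in>UNIV - {i}. b k) * (of_int (b i) * w $ i)"
      by simp
    also have "\<dots> \<in> \<int>" by (rule Ints_mult[OF Ints_of_int b(2)])
    finally show ?thesis .
  qed
  moreover have "d > 0" unfolding d_def using b(1) by (simp add: prod_pos)
  ultimately show thesis using that by blast
qed

lemma half_not_in_Ints: "(1/2::real) \<notin> \<int>"
proof
  assume "(1/2::real) \<in> \<int>"
  then obtain k where "(1/2::real) = of_int k" by (auto elim: Ints_cases)
  then have "2 * k = 1" by linarith
  then show False by presburger
qed

lemma rational_vector_orthogonal_dense_eq_0: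
  fixes E :: "(real^'n::finite) set"
  assumes dense: "dense_in_torus E" and w: "\<And>i. w $ i \<in> \<rat>" and orth: "\<And>x. x \<in> E \<Longrightarrow> w \<bullet> x = 0"
  shows "w = 0"
proof (rule ccontr)
  assume "w \<noteq> 0"
  obtain d :: int where d: "d > 0" "\<And>i. of_int d * w $ i \<in> \<int>"
    using rational_vector_common_denominator[OF w] by blast
  define z where "z = of_int d *\<^sub>R w"
  have "z \<bullet> u \<in> \<int>" if "integer_vector u" for u
  proof -
    have "z \<bullet> u = (\<Sum>i\<in>UNIV. (of_int d * w $ i) * u $ i)"
      by (simp add: z_def inner_vec_def)
    also have "\<dots> \<in> \<int>"
      by (rule Ints_sum, rule Ints_mult) (use d(2) that in \<open>auto simp: integer_vector_def\<close>)
    finally show ?thesis .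
  qed
  then have "{x + u | x u. x \<in> E \<and> integer_vector u} \<subseteq> {v. z \<bullet> v \<in> \<int>}"
    using orth by (auto simp: z_def inner_add_right)
  moreover have "closed {v. z \<bullet> v \<in> \<int>}"
    using continuous_closed_vimage[OF closed_Ints, of "\<lambda>v. z \<bullet> v"]
    by (simp add: vimage_def continuous_on_inner continuous_on_const continuous_on_id)
  ultimately have all: "z \<bullet> v \<in> \<int>" for v
    using closure_minimal dense unfolding dense_in_torus_def by blast
  have "z \<bullet> z > 0" using d(1) \<open>w \<noteq> 0\<close> by (simp add: z_def)
  then have "z \<bullet> ((1 / (2 * (z \<bullet> z))) *\<^sub>R z) = 1/2" by simp
  then show False using all half_not_in_Ints by metis
qed

lemma poly_mv_eq_0_if_eq_0_on_dense:
  fixes A :: "real^'n::finite^'n"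
  assumes dense: "dense_in_torus E"
    and "\<And>i. coeff p i \<in> \<rat>" and "\<And>i j. A $ i $ j \<in> \<rat>"
    and vanish: "\<And>x. x \<in> E \<Longrightarrow> poly_mv p A x = 0"
  shows "poly_mv p A x = 0"
proof -
  define N where "N = (\<chi> i j. poly_mv p A (axis j 1) $ i)"
  have N: "N *v x = poly_mv p A x" for x
  proof -
    have "poly_mv p A x = poly_mv p A (\<Sum>j\<in>UNIV. x $ j *s axis j 1)" by (simp add: basis_expansion)
    then show ?thesis
      by (simp add: poly_mv_sum_vec poly_mv_scalar_vec vec_cart_eq_iff N_def
          matrix_vector_mult_def mult.commute)
  qed
  have "N $ i = 0" for i
  proof (rule rational_vector_orthogonal_dense_eq_0[OF dense])
    show "N $ i $ j \<in> \<rat>" for j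
    proof -
      have "poly_mv p A (axis j 1) $ i \<in> \<rat>"
        by (rule poly_mv_rational) (use assms(2,3) in \<open>auto simp: axis_def\<close>)
      then show ?thesis by (simp add: N_def)
    qed
    show "N $ i \<bullet> x = 0" if "x \<in> E" for x
      using N[of x] vanish[OF that] by (simp add: inner_vec_def matrix_vector_mult_def vec_cart_eq_iff)
  qed
  then have "N = 0" by (simp add: vec_cart_eq_iff)
  then show ?thesis using N[of x] by simp
qed

section \<open>Nilpotency from a triangular form\<close>

definition flag_space :: "'a::comm_ring_1^'n::finite^'n \<Rightarrow> nat \<Rightarrow> ('a^'n) set" where
  "flag_space P k = {P *v w | w. \<forall>a. k \<le> index_pos a \<longrightarrow> w $ a = 0}"

lemma flag_space_closed:
  "u \<in> flag_space P k \<Longrightarrow> v \<in> flag_space P k \<Longrightarrow> a *s u + v \<in> flag_space P k"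
proof -
  assume "u \<in> flag_space P k" "v \<in> flag_space P k"
  then obtain w1 w2 where "u = P *v w1" "\<forall>a. k \<le> index_pos a \<longrightarrow> w1 $ a = 0"
    "v = P *v w2" "\<forall>a. k \<le> index_pos a \<longrightarrow> w2 $ a = 0" unfolding flag_space_def by blast
  then show ?thesis unfolding flag_space_def
    by (intro CollectI exI[of _ "a *s w1 + w2"])
      (simp add: matrix_vector_right_distrib matrix_vector_mult_scalar)
qed

lemma upper_triangular_preserves_support:
  fixes T :: "'a::comm_ring_1^'n::finite^'n"
  assumes tri: "\<And>a b. index_pos b < index_pos a \<Longrightarrow> T $ a $ b = 0"
    and w: "\<forall>a. k \<le> index_pos a \<longrightarrow> w $ a = 0"
  shows "\<forall>a. k \<le> index_pos a \<longrightarrow> (T *v w) $ a = 0"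
proof (intro allI impI)
  fix a :: 'n assume "k \<le> index_pos a"
  then have "T $ a $ b * w $ b = 0" for b :: 'n
    using w tri[of b a] by (cases "k \<le> index_pos b") auto
  then show "(T *v w) $ a = 0" by (simp add: matrix_vector_mult_def)
qed

context
  fixes M P T :: "'a::comm_ring_1^'n::finite^'n"
  assumes MP: "M ** P = P ** T"
    and tri: "\<And>a b. index_pos b < index_pos a \<Longrightarrow> T $ a $ b = 0"
begin

lemma mult_flag_space:
  assumes "u \<in> flag_space P k"
  shows "M *v u \<in> flag_space P k"
proof -
  obtain w where "u = P *v w" and w: "\<forall>a. k \<le> index_pos a \<longrightarrow> w $ a = 0"
    using assms unfolding flag_space_def by blast
  then have "M *v u = P *v (T *v w)" by (simp add: matrix_vector_mul_assoc MP)
  then show ?thesis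
    unfolding flag_space_def using upper_triangular_preserves_support[OF tri w] by blast
qed

lemma poly_mv_flag_space:
  assumes u: "u \<in> flag_space P k"
  shows "poly_mv h M u \<in> flag_space P k"
proof (induct h)
  case 0
  show ?case unfolding flag_space_def by (intro CollectI exI[of _ 0]) simp
next
  case (pCons a h)
  show ?case using flag_space_closed[OF u mult_flag_space[OF pCons(2)]] by simp
qed

text \<open>A polynomial vanishing at the \<open>k\<close>-th diagonal entry \<open>t\<close> of \<open>T\<close> contains the factor \<open>M - t\<close>,
  which kills the \<open>k\<close>-th coordinate.\<close>
lemma poly_mv_flag_space_Suc:
  assumes k: "k < CARD('n)" and root: "poly r (T $ enum_index k $ enum_index k) = 0"
    and u: "u \<in> flag_space P (Suc k)"
  shows "poly_mv r M u \<in> flag_space P k"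
proof -
  define a0 :: 'n where "a0 = enum_index k"
  have a0: "index_pos a0 = k" unfolding a0_def using k by simp
  define t where "t = T $ a0 $ a0"
  have "[:-t, 1:] dvd r" using root poly_eq_0_iff_dvd unfolding t_def a0_def by blast
  then obtain h where r: "r = [:-t, 1:] * h" by (rule dvdE)
  obtain w where hw: "poly_mv h M u = P *v w" and w: "\<forall>a. Suc k \<le> index_pos a \<longrightarrow> w $ a = 0"
    using poly_mv_flag_space[OF u] unfolding flag_space_def by blast
  have eq: "poly_mv r M u = P *v (T *v w - t *s w)"
    unfolding r poly_mv_mult poly_mv_linear hw
    by (simp add: matrix_vector_mul_assoc MP matrix_vector_mult_diff_distrib matrix_vector_mult_scalar)
  have "(T *v w - t *s w) $ a = 0" if a: "k \<le> index_pos a" for a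
  proof (cases "index_pos a = k")
    case False
    then show ?thesis using a upper_triangular_preserves_support[OF tri w] w by simp
  next
    case True
    then have "a = a0" using a0 index_pos_inject by metis
    have "T $ a0 $ b * w $ b = (if b = a0 then t * w $ a0 else 0)" for b
    proof (cases "b = a0")
      case False
      then have "index_pos b \<noteq> k" using a0 index_pos_inject by metis
      then show ?thesis
        using tri[of b a0] a0 w False by (cases "index_pos b < k") simp_all
    qed (simp add: t_def)
    then have "(T *v w) $ a0 = (\<Sum>b\<in>UNIV. if b = a0 then t * w $ a0 else 0)"
      unfolding matrix_vector_mult_def by simp
    then show ?thesis using \<open>a = a0\<close> by simp
  qed
  then show ?thesis unfolding eq flag_space_def by blast
qed

lemma triangular_poly_mv_nilpotent:
  assumes PQ: "P ** Q = mat 1" and roots: "\<And>a. poly r (T $ a $ a) = 0"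
  shows "(poly_mv r M ^^ CARD('n)) v = 0"
proof -
  have "(poly_mv r M ^^ m) v \<in> flag_space P (CARD('n) - m)" if "m \<le> CARD('n)" for m
    using that
  proof (induct m)
    case 0
    have "v = P *v (Q *v v)" using PQ by (simp add: matrix_vector_mul_assoc)
    moreover have "\<forall>a. CARD('n) \<le> index_pos a \<longrightarrow> (Q *v v) $ a = 0"
      using index_pos_less by (metis not_le)
    ultimately show ?case unfolding flag_space_def by auto
  next
    case (Suc m)
    then have "(poly_mv r M ^^ m) v \<in> flag_space P (Suc (CARD('n) - Suc m))"
      by (simp add: Suc_diff_Suc)
    with Suc(2) show ?case using poly_mv_flag_space_Suc[OF _ roots] by simp
  qed
  then have "(poly_mv r M ^^ CARD('n)) v \<in> flag_space P 0" by (metis diff_self_eq_0 order_refl)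
  then obtain w where "(poly_mv r M ^^ CARD('n)) v = P *v w" and "\<forall>a. w $ a = 0"
    unfolding flag_space_def by auto
  moreover from this(2) have "w = 0" by (simp add: vec_cart_eq_iff)
  ultimately show ?thesis by simp
qed

end

lemma poly_mv_nilpotent_if_vanishes_on_eigenvalues:
  fixes M :: "complex^'n::finite^'n"
  assumes roots: "\<And>z. poly (char_poly (to_mat M)) z = 0 \<Longrightarrow> poly r z = 0"
  shows "(poly_mv r M ^^ CARD('n)) v = 0"
proof -
  obtain n_as and P :: "complex^'n^'n" where jnf: "jordan_nf (to_mat M) n_as"
    and size: "sum_list (map fst n_as) = CARD('n)"
    and P: "invertible P" and MP: "M ** P = P ** from_mat (jordan_matrix n_as)"
    by (rule jordan_nf_vec[of M])
  define J where "J = (jordan_matrix n_as :: complex mat)"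
  have sim: "similar_mat (to_mat M) J" using jnf unfolding jordan_nf_def J_def by simp
  have J: "J \<in> carrier_mat CARD('n) CARD('n)" unfolding J_def using size by auto
  have upper: "J $$ (i,j) = 0" if "i < CARD('n)" "j < i" for i j
    unfolding J_def by (rule jordan_matrix_upper_triangular) (use that size in auto)
  have diag: "poly r (J $$ (k,k)) = 0" if "k < CARD('n)" for k
  proof (rule roots)
    have "char_poly (to_mat M) = (\<Prod>a\<leftarrow>diag_mat J. [:- a, 1:])"
      unfolding char_poly_similar[OF sim]
      by (rule char_poly_upper_triangular[OF J]) (use upper J in \<open>auto simp: upper_triangular_def\<close>)
    moreover have "J $$ (k,k) \<in> set (diag_mat J)" using that J unfolding diag_mat_def by auto
    ultimately show "poly (char_poly (to_mat M)) (J $$ (k,k)) = 0"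
      by (auto simp: poly_prod_list prod_list_zero_iff)
  qed
  obtain Q where PQ: "P ** Q = mat 1" using P unfolding invertible_def by blast
  show ?thesis
  proof (rule triangular_poly_mv_nilpotent[OF MP _ PQ])
    show "from_mat (jordan_matrix n_as) $ a $ b = 0" if "index_pos b < index_pos a" for a b :: 'n
      using upper[OF index_pos_less[of a] that] unfolding from_mat_def J_def by simp
    show "poly r (from_mat (jordan_matrix n_as) $ a $ a) = 0" for a :: 'n
      using diag[OF index_pos_less[of a]] unfolding from_mat_def J_def by simp
  qed
qed

section \<open>A squarefree annihilating polynomial forces diagonalizability\<close>

lemma rsquarefree_annihilator_kernel_stable:
  fixes M :: "complex^'n::finite^'n"
  assumes sf: "rsquarefree r" and annihilates: "\<And>v. poly_mv r M v = 0"
    and "(M - mat l) *v ((M - mat l) *v v) = 0"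
  shows "(M - mat l) *v v = 0"
proof (rule ccontr)
  define w where "w = (M - mat l) *v v"
  assume "(M - mat l) *v v \<noteq> 0"
  then have "w \<noteq> 0" unfolding w_def .
  have eig: "M *v w = l *s w"
    using assms(3) unfolding w_def[symmetric] by (simp add: matrix_vector_mult_diff_rdistrib mat_mult_vector)
  then have "poly r l = 0" using annihilates[of w] poly_mv_eigenvector[OF eig, of r] \<open>w \<noteq> 0\<close> by simp
  then obtain g where r: "r = [:-l,1:] * g" using poly_eq_0_iff_dvd by (metis dvdE)
  have "poly (pderiv r) l = poly g l"
    unfolding r pderiv_mult poly_add poly_mult by (simp add: pderiv_pCons)
  then have "poly g l \<noteq> 0" using sf \<open>poly r l = 0\<close> unfolding rsquarefree_roots by metis
  moreover have "poly_mv r M v = poly g l *s w"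
    unfolding r mult.commute[of "[:-l,1:]" g] poly_mv_mult poly_mv_linear_mat w_def[symmetric]
    by (rule poly_mv_eigenvector[OF eig])
  ultimately show False using annihilates \<open>w \<noteq> 0\<close> by simp
qed

lemma jordan_matrix_diagonal_if_blocks_trivial:
  assumes "\<forall>x\<in>set n_as. fst x = 1"
    and "i < sum_list (map fst n_as)" and "j < sum_list (map fst n_as)" and "i \<noteq> j"
  shows "jordan_matrix n_as $$ (i,j) = (0::'a::{zero,one})"
  using assms
proof (induct n_as arbitrary: i j)
  case Nil then show ?case by simp
next
  case (Cons x rest)
  obtain a where x: "x = (1,a)" using Cons(2) by (cases x) auto
  have dims: "dim_row (jordan_block 1 a) = 1" "dim_col (jordan_block 1 a) = 1"
    "dim_row (jordan_matrix rest) = sum_list (map fst rest)"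
    "dim_col (jordan_matrix rest) = sum_list (map fst rest)"
    using jordan_block_carrier[of 1 a] by auto
  show ?case
  proof (cases "i < 1")
    case True
    then show ?thesis using Cons(3-5) unfolding x jordan_matrix_Cons by (simp add: dims)
  next
    case False
    then show ?thesis using Cons(1)[of "i - 1" "j - 1"] Cons(2-5) unfolding x jordan_matrix_Cons
      by (auto simp: dims)
  qed
qed

lemma sum_list_min_1_eq_min_2:
  assumes "sum_list (map (\<lambda>n. min 1 n) xs) = sum_list (map (\<lambda>n. min 2 n) (xs::nat list))"
  shows "\<forall>n\<in>set xs. n \<le> 1"
  using assms
proof (induct xs)
  case Nil then show ?case by simp
next
  case (Cons x xs)
  have "sum_list (map (\<lambda>n. min 1 n) xs) \<le> sum_list (map (\<lambda>n. min 2 n) xs)"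
    by (rule sum_list_mono) simp
  moreover have "min 1 x \<le> min 2 (x::nat)" by simp
  ultimately show ?case using Cons by auto
qed

text \<open>The number of Jordan blocks of size at least \<open>k\<close> for \<open>l\<close> is read off the kernels of
  \<open>(A - l)\<^sup>k\<close>, so equal kernels for \<open>k = 1, 2\<close> leave only blocks of size one.\<close>
lemma jordan_nf_blocks_trivial:
  assumes jnf: "jordan_nf A n_as" and A: "A \<in> carrier_mat n n"
    and ker: "\<And>l. mat_kernel (char_matrix A l ^\<^sub>m 2) = mat_kernel (char_matrix A l ^\<^sub>m 1)"
  shows "\<forall>x\<in>set n_as. fst x = 1"
proof
  fix x assume x: "x \<in> set n_as"
  obtain k l where kl: "x = (k,l)" by force
  have "dim_gen_eigenspace A l 2 = dim_gen_eigenspace A l 1"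
    unfolding dim_gen_eigenspace_def kernel_dim_def using A by (simp add: ker)
  then have "sum_list (map (\<lambda>n. min 1 n) (map fst [(n, e)\<leftarrow>n_as . e = l])) =
      sum_list (map (\<lambda>n. min 2 n) (map fst [(n, e)\<leftarrow>n_as . e = l]))"
    unfolding dim_gen_eigenspace[OF jnf] by simp
  from sum_list_min_1_eq_min_2[OF this] have "k \<le> 1" using x kl by force
  moreover have "0 \<notin> fst ` set n_as" using jnf unfolding jordan_nf_def by simp
  then have "k \<noteq> 0" using x kl by (metis fst_conv image_eqI)
  ultimately show "fst x = 1" using kl by simp
qed

lemma diagonalizable_if_kernels_stable:
  fixes M :: "complex^'n::finite^'n"
  assumes stable: "\<And>l v. (M - mat l) *v ((M - mat l) *v v) = 0 \<Longrightarrow> (M - mat l) *v v = 0"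
  shows "\<exists>P D :: complex^'n^'n. invertible P \<and> diagonal_matrix D \<and> M ** P = P ** D"
proof -
  obtain n_as and P :: "complex^'n^'n" where jnf: "jordan_nf (to_mat M) n_as"
    and size: "sum_list (map fst n_as) = CARD('n)"
    and P: "invertible P" and MP: "M ** P = P ** from_mat (jordan_matrix n_as)"
    by (rule jordan_nf_vec[of M])
  have char: "char_matrix (to_mat M) l = to_mat (M - mat l)" for l
    by (intro eq_matI) (auto simp: char_matrix_def Finite_Cartesian_Product.mat_def enum_index_inject)
  have "mat_kernel (char_matrix (to_mat M) l ^\<^sub>m 2) = mat_kernel (char_matrix (to_mat M) l ^\<^sub>m 1)" for l
  proof -
    have "u \<in> mat_kernel (to_mat ((M - mat l) ** (M - mat l))) \<longleftrightarrow> u \<in> mat_kernel (to_mat (M - mat l))"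
      for u
    proof (cases "u \<in> carrier_vec CARD('n)")
      case True
      then obtain x :: "complex^'n" where u: "u = to_vec x" using to_vec_from_vec by metis
      show ?thesis using True stable[of l x]
        by (auto simp: mat_kernel_def u to_vec_mult[symmetric] matrix_vector_mul_assoc[symmetric] to_vec_eq_0_iff)
    qed (auto simp: mat_kernel_def)
    then show ?thesis unfolding char by (auto simp: numeral_2_eq_2 to_mat_mult)
  qed
  then have ones: "\<forall>x\<in>set n_as. fst x = 1" using jordan_nf_blocks_trivial[OF jnf to_mat_carrier] by blast
  have "jordan_matrix n_as $$ (index_pos a, index_pos b) = 0" if "a \<noteq> b" for a b :: 'n
    by (rule jordan_matrix_diagonal_if_blocks_trivial[OF ones]) (simp_all add: size index_pos_inject that)
  then have "diagonal_matrix (from_mat (jordan_matrix n_as) :: complex^'n^'n)"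
    unfolding diagonal_matrix_def from_mat_def by simp
  with P MP show ?thesis by blast
qed

definition cvec :: "real^'n \<Rightarrow> complex^'n" where
  "cvec x = (\<chi> i. complex_of_real (x $ i))"

lemma complexify_mult_cvec: "complexify M *v cvec x = cvec (M *v x)"
  by (simp add: vec_cart_eq_iff matrix_vector_mult_def complexify_def cvec_def)

lemma poly_mv_cvec:
  "poly_mv (map_poly complex_of_real p) (complexify M) (cvec x) = cvec (poly_mv p M x)"
  by (induct p) (simp_all add: map_poly_pCons complexify_mult_cvec, simp_all add: cvec_def vec_cart_eq_iff)

lemma funpow_poly_mv_cvec:
  "(poly_mv (map_poly complex_of_real p) (complexify M) ^^ k) (cvec x) = cvec ((poly_mv p M ^^ k) x)"
  by (induct k) (simp_all add: poly_mv_cvec)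

lemma cvec_eq_0_iff: "cvec x = 0 \<longleftrightarrow> x = 0"
  by (simp add: cvec_def vec_cart_eq_iff)

lemma poly_mv_complexify_eq_0:
  assumes "\<And>x. poly_mv p M x = 0"
  shows "poly_mv (map_poly complex_of_real p) (complexify M) v = 0"
proof -
  have "v = cvec (\<chi> i. Re (v $ i)) + \<i> *s cvec (\<chi> i. Im (v $ i))"
    by (simp add: vec_cart_eq_iff cvec_def complex_eq_iff)
  then show ?thesis
    by (metis poly_mv_add_vec poly_mv_scalar_vec poly_mv_cvec assms cvec_eq_0_iff
        vector_smult_rzero add_0)
qed

section \<open>The squarefree part of the characteristic polynomial of a rational matrix\<close>

lemma of_real_of_rat: "of_real (of_rat q) = (of_rat q :: 'a::{real_field,field_char_0})"
  by (cases q) (simp add: of_rat_rat of_real_divide)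

lemma rsquarefree_same_roots:
  fixes p :: "rat poly"
  assumes deg: "degree p > 0"
  obtains r where "rsquarefree (map_poly (of_rat :: rat \<Rightarrow> complex) r)"
    and "\<And>z. poly (map_poly of_rat r) z = 0 \<longleftrightarrow> poly (map_poly (of_rat :: rat \<Rightarrow> complex) p) z = 0"
proof -
  interpret h: map_poly_idom_hom "of_rat :: rat \<Rightarrow> complex" ..
  let ?h = "map_poly (of_rat :: rat \<Rightarrow> complex)"
  define d where "d = gcd p (pderiv p)"
  define s where "s = fst (bezout_coefficients p (pderiv p))"
  define t where "t = snd (bezout_coefficients p (pderiv p))"
  have hd: "?h (pderiv q) = pderiv (?h q)" for q by (rule of_rat_hom.map_poly_pderiv)
  have "pderiv (?h p) \<noteq> 0" using deg by (simp add: pderiv_eq_0_iff)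
  moreover have "?h p = ?h (p div d) * ?h d" unfolding d_def by (metis dvd_div_mult_self gcd_dvd1 h.hom_mult)
  moreover have "pderiv (?h p) = ?h (pderiv p div d) * ?h d"
    unfolding d_def by (metis dvd_div_mult_self gcd_dvd2 h.hom_mult hd)
  moreover have "?h d = ?h s * ?h p + ?h t * pderiv (?h p)"
    unfolding s_def t_def d_def by (metis bezout_coefficients_fst_snd h.hom_mult h.hom_add hd)
  ultimately show thesis using poly_squarefree_decomp that by blast
qed

lemma rational_squarefree_poly_vanishing_on_eigenvalues:
  fixes A :: "real^'n::finite^'n"
  assumes rat: "\<And>i j. A $ i $ j \<in> \<rat>"
  obtains r :: "real poly" where "\<And>i. coeff r i \<in> \<rat>"
    and "rsquarefree (map_poly complex_of_real r)"
    and "\<And>z. poly (char_poly (to_mat (complexify A))) z = 0 \<Longrightarrow> poly (map_poly complex_of_real r) z = 0"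
proof -
  define qA :: "rat mat" where
    "qA = Matrix.mat CARD('n) CARD('n) (\<lambda>(i,j). inv_into UNIV of_rat (A $ enum_index i $ enum_index j))"
  have qA: "qA \<in> carrier_mat CARD('n) CARD('n)" by (simp add: qA_def)
  have "of_rat (inv_into UNIV of_rat x) = x" if "x \<in> \<rat>" for x :: real
    using that unfolding Rats_def by (rule f_inv_into_f)
  then have mapq: "map_mat of_rat qA = to_mat (complexify A)"
    using rat by (intro eq_matI) (auto simp: qA_def complexify_def of_real_of_rat[where 'a=complex, symmetric])
  have char: "char_poly (to_mat (complexify A)) = map_poly of_rat (char_poly qA)"
    unfolding mapq[symmetric] by (rule of_rat_hom.char_poly_hom[OF qA])
  have "degree (char_poly qA) > 0" using degree_monic_char_poly[OF qA] by simp
  then obtain q where sf: "rsquarefree (map_poly (of_rat :: rat \<Rightarrow> complex) q)"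
    and roots: "\<And>z::complex. poly (map_poly of_rat q) z = 0 \<longleftrightarrow> poly (map_poly of_rat (char_poly qA)) z = 0"
    using rsquarefree_same_roots by blast
  have q: "map_poly complex_of_real (map_poly of_rat q) = map_poly of_rat q"
    by (simp add: map_poly_map_poly o_def of_real_of_rat)
  show thesis
  proof
    show "coeff (map_poly of_rat q) i \<in> \<rat>" for i by (simp add: coeff_map_poly)
  qed (use sf roots char q in auto)
qed

theorem mainTheorem14:
  fixes E E' :: "(real^'n) set"
    and B :: "real^'n \<Rightarrow> real^'n \<Rightarrow> real"
    and A :: "real^'n^'n"
  assumes "subspace E" and "subspace E'"
    and "E \<inter> E' = {0}" and "{x + y | x y. x \<in> E \<and> y \<in> E'} = UNIV"
    and "dim E \<ge> 1"
    and "dense_in_torus E"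
    and "scalar_product_on E B"
    and "in_GL_Z A"
    and "(\<lambda>x. A *v x) ` E \<subseteq> E" and "(\<lambda>x. A *v x) ` E' \<subseteq> E'"
    and "similarity_on E B A"
  shows "semisimple A"
proof -
  from \<open>in_GL_Z A\<close> obtain A' where "integer_matrix A" "A ** A' = mat 1" "A' ** A = mat 1"
    unfolding in_GL_Z_def by blast
  then have rat: "A $ i $ j \<in> \<rat>" for i j
    using Ints_subset_Rats unfolding integer_matrix_def by blast
  obtain c where normal: "normal_on_subspace E B A (c *\<^sub>R A')"
    using similarity_normal_on_subspace assms(1,7,9,11) \<open>A ** A' = mat 1\<close> \<open>A' ** A = mat 1\<close>
    by (metis scalar_product_subspace.intro)
  obtain r where r_rat: "\<And>i. coeff r i \<in> \<rat>" and sf: "rsquarefree (map_poly complex_of_real r)"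
    and roots: "\<And>z. poly (char_poly (to_mat (complexify A))) z = 0 \<Longrightarrow> poly (map_poly complex_of_real r) z = 0"
    using rational_squarefree_poly_vanishing_on_eigenvalues[OF rat] by blast
  have "(poly_mv r A ^^ CARD('n)) x = 0" for x
    using poly_mv_nilpotent_if_vanishes_on_eigenvalues[of "complexify A" _ "cvec x", OF roots]
    by (simp add: funpow_poly_mv_cvec cvec_eq_0_iff)
  then have "poly_mv r A x = 0" if "x \<in> E" for x
    using normal_on_subspace.poly_mv_nilpotent_imp_eq_0[OF normal that] by blast
  then have "poly_mv r A x = 0" for x
    using poly_mv_eq_0_if_eq_0_on_dense[OF \<open>dense_in_torus E\<close> r_rat rat] by blast
  then have annihilates: "poly_mv (map_poly complex_of_real r) (complexify A) v = 0" for v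
    by (rule poly_mv_complexify_eq_0)
  have "(complexify A - mat l) *v v = 0"
    if "(complexify A - mat l) *v ((complexify A - mat l) *v v) = 0" for l v
    using rsquarefree_annihilator_kernel_stable[OF sf annihilates that] .
  then show ?thesis unfolding semisimple_def by (rule diagonalizable_if_kernels_stable)
qed

end
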